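(* Let $d\ge 2$ and $\ell\ge 2$. The girth $g$ (length of a shortest directed cycle) of the cyclic Kautz digraph $CK(d,\ell)$ satisfies $g\ge k_0$, where $k_0$ is the smallest positive integer $k$ such that $\ell\not\equiv 1 \pmod k$.
   Context: The cyclic Kautz digraph $CK(d,\ell)$ has vertex set $\{x_1\ldots x_\ell\in\mathbb Z_{d+1}^\ell : x_i\neq x_{i+1}\ (1\le i\le \ell-1),\ x_\ell\neq x_1\}$ and arcs $x_1x_2\ldots x_\ell\to x_2\ldots x_\ell y$ for every $y\in\mathbb Z_{d+1}$ with $y\neq x_2,x_\ell$. *)

theory Defs
  imports Main "HOL-Number_Theory.Cong"
begin

text \<open>Vertices of the cyclic Kautz digraph CK(d,l): words x_1...x_l over Z_{d+1}
  (symbols represented by naturals 0..d), with x_i \<noteq> x_{i+1} and x_l \<noteq> x_1.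
  Lists are 0-indexed, so x_1 = xs!0 and x_l = xs!(l-1).\<close>
definition ck_vertices :: "nat \<Rightarrow> nat \<Rightarrow> nat list set" where
  "ck_vertices d l = {xs. length xs = l \<and> (\<forall>i<l. xs ! i < d + 1)
      \<and> (\<forall>i. i + 1 < l \<longrightarrow> xs ! i \<noteq> xs ! (i + 1))
      \<and> xs ! (l - 1) \<noteq> xs ! 0}"

definition ck_arc :: "nat \<Rightarrow> nat \<Rightarrow> nat list \<Rightarrow> nat list \<Rightarrow> bool" where
  "ck_arc d l xs ys \<longleftrightarrow> xs \<in> ck_vertices d l \<and> ys \<in> ck_vertices d l \<and>
     (\<exists>y. y < d + 1 \<and> y \<noteq> xs ! 1 \<and> y \<noteq> xs ! (l - 1) \<and> ys = tl xs @ [y])"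

definition ck_has_cycle :: "nat \<Rightarrow> nat \<Rightarrow> nat \<Rightarrow> bool" where
  "ck_has_cycle d l k \<longleftrightarrow> k > 0 \<and> (\<exists>v :: nat \<Rightarrow> nat list.
      (\<forall>i<k. v i \<in> ck_vertices d l) \<and> inj_on v {..<k} \<and>
      (\<forall>i<k. ck_arc d l (v i) (v ((i + 1) mod k))))"

definition ck_girth :: "nat \<Rightarrow> nat \<Rightarrow> nat" where
  "ck_girth d l = (LEAST k. ck_has_cycle d l k)"

end

theory Submission
  imports Defs
begin

text \<open>Along a walk every arc shifts the word one letter to the left. In a closed walk of
  length \<open>k\<close> with \<open>k dvd l - 1\<close>, the walk returns to its starting vertex \<open>x\<close> after \<open>l - 1\<close>
  steps, and these steps carry the first letter of \<open>x\<close> to position \<open>0\<close> while the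
  starting vertex has its last letter there; hence \<open>x\<^sub>l = x\<^sub>1\<close>, which vertices forbid.
  Since the girth is a \<open>LEAST\<close>, a cycle must also be exhibited: iterating a successor map
  on the finite vertex set eventually revisits a vertex.\<close>

lemma shift_walk_nth:
  assumes step: "\<And>i. \<exists>y. w (Suc i) = tl (w i) @ [y]"
    and len: "\<And>i. length (w i) = l"
    and "j + m < l"
  shows "w m ! j = w 0 ! (j + m)"
  using \<open>j + m < l\<close>
proof (induction m arbitrary: j)
  case 0
  then show ?case by simp
next
  case (Suc m)
  obtain y where y: "w (Suc m) = tl (w m) @ [y]" using step by blast
  have j: "j < length (tl (w m))" using Suc.prems len[of m] by simp
  then have "w (Suc m) ! j = w m ! Suc j" using y by (simp add: nth_append nth_tl)
  also have "\<dots> = w 0 ! (Suc j + m)" using Suc by simp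
  finally show ?case by simp
qed

lemma ck_arc_imp_shift: "ck_arc d l xs ys \<Longrightarrow> \<exists>y. ys = tl xs @ [y]"
  unfolding ck_arc_def by blast

lemma ck_cycle_length_not_cong:
  assumes "ck_has_cycle d l k"
  shows "\<not> [l = 1] (mod k)"
proof
  assume cong: "[l = 1] (mod k)"
  from assms obtain v where "k > 0" and V: "\<forall>i<k. v i \<in> ck_vertices d l"
    and A: "\<forall>i<k. ck_arc d l (v i) (v ((i + 1) mod k))"
    unfolding ck_has_cycle_def by blast
  define w where "w i = v (i mod k)" for i
  have w_vertex: "w i \<in> ck_vertices d l" for i
    using V \<open>k > 0\<close> unfolding w_def by simp
  have "\<exists>y. w (Suc i) = tl (w i) @ [y]" for i
  proof -
    have "ck_arc d l (v (i mod k)) (v ((i mod k + 1) mod k))"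
      using A \<open>k > 0\<close> by simp
    then show ?thesis unfolding w_def by (simp add: mod_Suc_eq ck_arc_imp_shift)
  qed
  moreover have "length (w i) = l" for i
    using w_vertex unfolding ck_vertices_def by simp
  ultimately have first_letter: "w (l - 1) ! 0 = w 0 ! (l - 1)"
    using shift_walk_nth[of w l 0 "l - 1"] by (cases l) auto
  have "k dvd l - 1"
    using cong by (cases l) (auto simp: cong_altdef_nat cong_sym_eq cong_0_iff)
  then have "w (l - 1) = w 0" unfolding w_def by simp
  with first_letter w_vertex[of 0] show False
    unfolding ck_vertices_def by simp
qed

lemma finite_self_map_periodic_point:
  assumes "finite S" "x \<in> S" "f ` S \<subseteq> S"
  shows "\<exists>y \<in> S. \<exists>n > 0. (f ^^ n) y = y"
proof -
  have orbit: "(f ^^ n) x \<in> S" for n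
    by (induction n) (use assms in auto)
  have "\<not> inj (\<lambda>n. (f ^^ n) x)"
  proof
    assume "inj (\<lambda>n. (f ^^ n) x)"
    then have "infinite (range (\<lambda>n. (f ^^ n) x))"
      using finite_imageD infinite_UNIV_nat by blast
    with orbit \<open>finite S\<close> show False
      by (metis finite_subset image_subsetI)
  qed
  then obtain i j where "i < j" "(f ^^ i) x = (f ^^ j) x"
    unfolding inj_def by (metis linorder_neqE_nat)
  then have "(f ^^ (j - i)) ((f ^^ i) x) = (f ^^ i) x"
    by (metis funpow_add le_add_diff_inverse2 less_imp_le o_apply)
  with orbit \<open>i < j\<close> show ?thesis by (metis zero_less_diff)
qed

lemma periodic_point_cycle:
  assumes "(f ^^ n) y = y" "n > 0"
  shows "\<exists>k > 0. inj_on (\<lambda>t. (f ^^ t) y) {..<k} \<and> (f ^^ k) y = y"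
proof -
  define k where "k = (LEAST k. k > 0 \<and> (f ^^ k) y = y)"
  have k: "k > 0" "(f ^^ k) y = y"
    using LeastI[of "\<lambda>k. k > 0 \<and> (f ^^ k) y = y" n] assms unfolding k_def by auto
  have minimal: "0 < m \<Longrightarrow> m < k \<Longrightarrow> (f ^^ m) y \<noteq> y" for m
    using not_less_Least unfolding k_def by blast
  have "a = b" if "a < b" "b < k" "(f ^^ a) y = (f ^^ b) y" for a b
  proof -
    \<comment> \<open>Running on for \<open>k - b\<close> more steps turns the coincidence into an earlier return to \<open>y\<close>.\<close>
    have "(f ^^ (k - b + a)) y = (f ^^ (k - b)) ((f ^^ b) y)"
      using that(3) by (simp add: funpow_add)
    also have "\<dots> = y"
      using k(2) \<open>b < k\<close> by (metis funpow_add le_add_diff_inverse2 less_imp_le o_apply)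
    finally have "(f ^^ (k - b + a)) y = y" .
    moreover have "0 < k - b + a" "k - b + a < k" using that by linarith+
    ultimately show ?thesis using minimal[of "k - b + a"] by simp
  qed
  then have "inj_on (\<lambda>t. (f ^^ t) y) {..<k}"
    by (intro inj_onI) (metis lessThan_iff linorder_neqE_nat)
  with k show ?thesis by blast
qed

lemma finite_self_map_has_cycle:
  assumes "finite S" "x \<in> S" "f ` S \<subseteq> S"
  shows "\<exists>k::nat > 0. \<exists>v. inj_on v {..<k} \<and> (\<forall>i<k. v i \<in> S \<and> v ((i + 1) mod k) = f (v i))"
proof -
  obtain y n where "y \<in> S" and periodic: "(f ^^ n) y = y" "n > 0"
    using finite_self_map_periodic_point[OF assms] by blast
  then obtain k where "k > 0" and inj: "inj_on (\<lambda>t. (f ^^ t) y) {..<k}"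
    and returns: "(f ^^ k) y = y"
    using periodic_point_cycle[OF periodic] by blast
  have "(f ^^ t) y \<in> S" for t
    by (induction t) (use \<open>y \<in> S\<close> assms(3) in auto)
  moreover have "(f ^^ ((i + 1) mod k)) y = f ((f ^^ i) y)" if "i < k" for i
  proof (cases "i + 1 < k")
    case False
    with that have "k = Suc i" by simp
    with returns show ?thesis by simp
  qed simp
  ultimately show ?thesis using \<open>k > 0\<close> inj by blast
qed

lemma finite_ck_vertices: "finite (ck_vertices d l)"
proof (rule finite_subset)
  show "ck_vertices d l \<subseteq> {xs. set xs \<subseteq> {..<d + 1} \<and> length xs = l}"
    unfolding ck_vertices_def by (auto simp: in_set_conv_nth)
  show "finite {xs. set xs \<subseteq> {..<d + 1} \<and> length xs = l}"
    by (rule finite_lists_length_eq) simp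
qed

lemma ck_vertex_exists:
  assumes "d \<ge> 2" "l \<ge> 2"
  shows "map (\<lambda>i. if i = l - 1 then 2 else i mod 2) [0..<l] \<in> ck_vertices d l"
  using assms unfolding ck_vertices_def by (auto simp: mod_Suc)

lemma ck_arc_append:
  assumes xs: "xs \<in> ck_vertices d l" and "l \<ge> 2"
    and y: "y < d + 1" "y \<noteq> xs ! 1" "y \<noteq> xs ! (l - 1)"
  shows "ck_arc d l xs (tl xs @ [y])"
proof -
  have len: "length xs = l" using xs unfolding ck_vertices_def by simp
  have shifted: "i < l - 1 \<Longrightarrow> (tl xs @ [y]) ! i = xs ! Suc i" for i
    using len by (simp add: nth_append nth_tl)
  have new_last: "(tl xs @ [y]) ! (l - 1) = y"
    using len \<open>l \<ge> 2\<close> by (simp add: nth_append)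
  have "tl xs @ [y] \<in> ck_vertices d l"
    unfolding ck_vertices_def
  proof (intro CollectI conjI allI impI)
    fix i assume "i < l"
    then show "(tl xs @ [y]) ! i < d + 1"
    proof (cases "i < l - 1")
      case False
      then have "i = l - 1" using \<open>i < l\<close> by simp
      then show ?thesis using new_last y(1) by simp
    qed (use shifted xs in \<open>auto simp: ck_vertices_def\<close>)
  next
    fix i assume "i + 1 < l"
    then show "(tl xs @ [y]) ! i \<noteq> (tl xs @ [y]) ! (i + 1)"
    proof (cases "i + 1 < l - 1")
      case False
      then have "i + 1 = l - 1" using \<open>i + 1 < l\<close> by simp
      then show ?thesis using shifted[of i] new_last y(3) by simp
    qed (use shifted xs in \<open>auto simp: ck_vertices_def\<close>)
  qed (use len \<open>l \<ge> 2\<close> shifted[of 0] new_last y(2) in auto)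
  with xs y show ?thesis unfolding ck_arc_def by blast
qed

definition ck_successor :: "nat \<Rightarrow> nat list \<Rightarrow> nat list" where
  "ck_successor l xs = tl xs @ [LEAST y. y \<noteq> xs ! 1 \<and> y \<noteq> xs ! (l - 1)]"

lemma ck_arc_successor:
  assumes "d \<ge> 2" "l \<ge> 2" "xs \<in> ck_vertices d l"
  shows "ck_arc d l xs (ck_successor l xs)"
proof -
  let ?P = "\<lambda>y. y \<noteq> xs ! 1 \<and> y \<noteq> xs ! (l - 1)"
  \<comment> \<open>Two forbidden symbols leave one of \<open>0, 1, 2\<close> free, and \<open>d \<ge> 2\<close> makes it available.\<close>
  have "?P 0 \<or> ?P 1 \<or> ?P 2" by arith
  then obtain y0 :: nat where "y0 \<le> 2" "?P y0"
    by (metis le0 one_le_numeral order_refl)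
  then have "?P (LEAST y. ?P y)" "(LEAST y. ?P y) \<le> 2"
    using LeastI[of ?P y0] Least_le[of ?P y0] by simp_all
  with assms show ?thesis
    unfolding ck_successor_def by (intro ck_arc_append) auto
qed

lemma ck_has_some_cycle:
  assumes "d \<ge> 2" "l \<ge> 2"
  shows "\<exists>k. ck_has_cycle d l k"
proof -
  have "ck_successor l ` ck_vertices d l \<subseteq> ck_vertices d l"
    using ck_arc_successor[OF assms] unfolding ck_arc_def by blast
  then obtain k and v :: "nat \<Rightarrow> nat list" where k: "k > 0" and inj: "inj_on v {..<k}"
    and cycle: "\<forall>i<k. v i \<in> ck_vertices d l \<and> v ((i + 1) mod k) = ck_successor l (v i)"
    using finite_self_map_has_cycle[OF finite_ck_vertices ck_vertex_exists[OF assms]] by blast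
  have "ck_has_cycle d l k"
    unfolding ck_has_cycle_def using k inj cycle ck_arc_successor[OF assms]
    by (intro conjI exI[of _ v]) auto
  then show ?thesis ..
qed

theorem mainTheorem9:
  fixes d l :: nat
  assumes "d \<ge> 2" and "l \<ge> 2"
  shows "ck_girth d l \<ge> (LEAST k::nat. k > 0 \<and> \<not> [l = 1] (mod k))"
proof -
  have girth_cycle: "ck_has_cycle d l (ck_girth d l)"
    unfolding ck_girth_def using ck_has_some_cycle[OF assms] by (rule LeastI_ex)
  then have "ck_girth d l > 0" unfolding ck_has_cycle_def by simp
  moreover have "\<not> [l = 1] (mod ck_girth d l)"
    using ck_cycle_length_not_cong[OF girth_cycle] .
  ultimately show ?thesis by (simp add: Least_le)
qed

end
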